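(* Let $P$ be a set of $n$ points in the plane in convex position, and let $S\subseteq P$ be a dominating set of the unit-disk graph $G(P)$. Then there exist a partition $\mathcal{A}$ of $P$ (into consecutive, nonempty, pairwise disjoint sublists) and a line-separable assignment $\phi:\mathcal{A}\rightarrow S$ such that for every center $p\in S$ we have $p\in G_p$, i.e., one of the sublists assigned to $p$ contains $p$.
   Context: $P$ is in convex position (every point of $P$ is a vertex of its convex hull), no three points of $P$ are collinear and no four lie on a common circle. $P$ is viewed as the cyclic list $\langle p_1,\dots,p_n\rangle$ ordered counterclockwise along the convex hull. A sublist is a contiguous subsequence of this cyclic list; sublists are consecutive if their concatenation is again a sublist. For a point $p$, $D_p$ is the closed disk of radius $1$ centered at $p$. The unit-disk graph $G(P)$ has vertex set $P$ and an edge between two points iff their Euclidean distance is at most $1$. A dominating set is a set $S\subseteq P$ such that every point of $P$ is in $S$ or adjacent to a point of $S$; points of $S$ are called centers. A partition $\mathcal{A}$ of $P$ is a partition of the cyclic list into consecutive, nonempty, pairwise disjoint sublists. An assignment $\phi:\mathcal{A}\to S$ maps each sublist $\alpha\in\mathcal{A}$ to exactly one center $p\in S$ with $\alpha\subseteq D_p$. The group $G_p$ of a center $p$ is the set of points in the sublists assigned to $p$. The assignment is line separable if for every two distinct centers $p,q$ there is a line $\ell$ such that the points of one of $G_p,G_q$ lie on one side of $\ell$ or on $\ell$, and the points of the other lie strictly on the other side of $\ell$. *)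

theory Defs
  imports "HOL-Analysis.Analysis"
begin

type_synonym point = "real^2"

text \<open>Orientation determinant of the triple (a, b, c); positive iff counterclockwise.\<close>
definition orient :: "point \<Rightarrow> point \<Rightarrow> point \<Rightarrow> real" where
  "orient a b c = (b$1 - a$1) * (c$2 - a$2) - (b$2 - a$2) * (c$1 - a$1)"

definition convex_position :: "point set \<Rightarrow> bool" where
  "convex_position P \<longleftrightarrow> (\<forall>p\<in>P. p \<notin> convex hull (P - {p}))"

definition no_three_collinear :: "point set \<Rightarrow> bool" where
  "no_three_collinear P \<longleftrightarrow>
     (\<forall>a\<in>P. \<forall>b\<in>P. \<forall>c\<in>P. a \<noteq> b \<and> a \<noteq> c \<and> b \<noteq> c \<longrightarrow> \<not> collinear {a, b, c})"

definition no_four_cocircular :: "point set \<Rightarrow> bool" where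
  "no_four_cocircular P \<longleftrightarrow>
     \<not> (\<exists>Q \<subseteq> P. card Q = 4 \<and> (\<exists>c r. \<forall>q\<in>Q. dist q c = r))"

text \<open>The list ps enumerates the points counterclockwise along the convex hull:
  every triple taken in list order is a counterclockwise (left) turn.\<close>
definition ccw_hull_order :: "point list \<Rightarrow> bool" where
  "ccw_hull_order ps \<longleftrightarrow>
     (\<forall>i j k. i < j \<and> j < k \<and> k < length ps \<longrightarrow> orient (ps!i) (ps!j) (ps!k) > 0)"

text \<open>Sublists (contiguous pieces) of the cyclic list ps, represented by their point sets.\<close>
definition cyc_sublist :: "point list \<Rightarrow> nat \<Rightarrow> nat \<Rightarrow> point set" where
  "cyc_sublist ps s l = {ps ! ((s + t) mod length ps) | t. t < l}"

definition is_sublist :: "point list \<Rightarrow> point set \<Rightarrow> bool" where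
  "is_sublist ps \<alpha> \<longleftrightarrow> (\<exists>s l. s < length ps \<and> 1 \<le> l \<and> l \<le> length ps \<and> \<alpha> = cyc_sublist ps s l)"

definition is_partition :: "point list \<Rightarrow> point set set \<Rightarrow> bool" where
  "is_partition ps A \<longleftrightarrow>
     (\<forall>\<alpha>\<in>A. is_sublist ps \<alpha> \<and> \<alpha> \<noteq> {}) \<and>
     (\<forall>\<alpha>\<in>A. \<forall>\<beta>\<in>A. \<alpha> \<noteq> \<beta> \<longrightarrow> \<alpha> \<inter> \<beta> = {}) \<and>
     \<Union>A = set ps"

definition unit_disk :: "point \<Rightarrow> point set" where
  "unit_disk p = cball p 1"

definition dominating_set :: "point set \<Rightarrow> point set \<Rightarrow> bool" where
  "dominating_set P S \<longleftrightarrow> S \<subseteq> P \<and>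
     (\<forall>x\<in>P. x \<in> S \<or> (\<exists>s\<in>S. x \<noteq> s \<and> dist x s \<le> 1))"

definition is_assignment :: "point set set \<Rightarrow> point set \<Rightarrow> (point set \<Rightarrow> point) \<Rightarrow> bool" where
  "is_assignment A S \<phi> \<longleftrightarrow> (\<forall>\<alpha>\<in>A. \<phi> \<alpha> \<in> S \<and> \<alpha> \<subseteq> unit_disk (\<phi> \<alpha>))"

definition center_group :: "point set set \<Rightarrow> (point set \<Rightarrow> point) \<Rightarrow> point \<Rightarrow> point set" where
  "center_group A \<phi> p = \<Union>{\<alpha>\<in>A. \<phi> \<alpha> = p}"

definition line_sep :: "point set \<Rightarrow> point set \<Rightarrow> bool" where
  "line_sep X Y \<longleftrightarrow> (\<exists>a b. a \<noteq> 0 \<and> (\<forall>x\<in>X. a \<bullet> x \<le> b) \<and> (\<forall>y\<in>Y. a \<bullet> y > b))"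

definition line_separable :: "point set set \<Rightarrow> point set \<Rightarrow> (point set \<Rightarrow> point) \<Rightarrow> bool" where
  "line_separable A S \<phi> \<longleftrightarrow>
     (\<forall>p\<in>S. \<forall>q\<in>S. p \<noteq> q \<longrightarrow>
        line_sep (center_group A \<phi> p) (center_group A \<phi> q) \<or> line_sep (center_group A \<phi> q) (center_group A \<phi> p))"

end

theory Submission
  imports Defs
begin

text \<open>Assign every point of \<open>P\<close> to its nearest center, breaking ties between equidistant
  centers by a fixed injective ranking of \<open>S\<close>. Two distinct centers \<open>p\<close>, \<open>q\<close> are then
  separated by their perpendicular bisector: the points served by the lower-ranked one lie
  on its closed side, those served by the other strictly on the opposite side. Since
  singleton sublists are admissible, the partition into singletons already does the job.\<close>

definition closest_points :: "'a::metric_space set \<Rightarrow> 'a \<Rightarrow> 'a set" where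
  "closest_points S x = {s \<in> S. \<forall>t\<in>S. dist x s \<le> dist x t}"

definition nearest_center :: "('a::metric_space \<Rightarrow> 'b::linorder) \<Rightarrow> 'a set \<Rightarrow> 'a \<Rightarrow> 'a" where
  "nearest_center key S x = arg_min_on key (closest_points S x)"

lemma closest_points_nonempty:
  assumes "finite S" "S \<noteq> {}"
  shows "closest_points S x \<noteq> {}"
proof -
  have "arg_min_on (dist x) S \<in> closest_points S x"
    using arg_min_if_finite(1)[OF assms] arg_min_least[OF assms]
    by (auto simp: closest_points_def)
  then show ?thesis by blast
qed

lemma nearest_center_in_closest_points:
  assumes "finite S" "S \<noteq> {}"
  shows "nearest_center key S x \<in> closest_points S x"
  unfolding nearest_center_def
  using assms by (intro arg_min_if_finite(1) closest_points_nonempty) (auto simp: closest_points_def)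

lemma nearest_center_in:
  assumes "finite S" "S \<noteq> {}"
  shows "nearest_center key S x \<in> S"
  using nearest_center_in_closest_points[OF assms, of key x] by (simp add: closest_points_def)

lemma dist_nearest_center_le:
  assumes "finite S" "t \<in> S"
  shows "dist x (nearest_center key S x) \<le> dist x t"
  using nearest_center_in_closest_points[OF assms(1)] assms(2)
  by (auto simp: closest_points_def)

lemma nearest_center_self:
  assumes "finite S" "p \<in> S"
  shows "nearest_center key S p = p"
  using dist_nearest_center_le[OF assms, of p key] by simp

lemma dist_nearest_center_less:
  assumes "finite S" "t \<in> S" "key t < key (nearest_center key S x)"
  shows "dist x (nearest_center key S x) < dist x t"
proof (rule ccontr)
  let ?c = "nearest_center key S x"
  assume not_less: "\<not> dist x ?c < dist x t"
  have "?c \<in> closest_points S x"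
    using nearest_center_in_closest_points[OF assms(1)] assms(2) by blast
  then have "dist x t \<le> dist x u" if "u \<in> S" for u
    using that not_less by (auto simp: closest_points_def)
  then have "t \<in> closest_points S x"
    using assms(2) by (simp add: closest_points_def)
  then have "key ?c \<le> key t"
    unfolding nearest_center_def
    by (intro arg_min_least) (auto simp: closest_points_def finite_subset[OF _ assms(1)])
  with assms(3) show False by simp
qed

lemma dist_le_dist_iff_inner:
  fixes x p q :: "'a::real_inner"
  shows "dist x p \<le> dist x q \<longleftrightarrow> (q - p) \<bullet> x \<le> (q \<bullet> q - p \<bullet> p) / 2"
proof -
  have "dist x p \<le> dist x q \<longleftrightarrow> dist x p ^ 2 \<le> dist x q ^ 2"
    by (simp add: power_mono_iff)
  also have "\<dots> \<longleftrightarrow> (x - p) \<bullet> (x - p) \<le> (x - q) \<bullet> (x - q)"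
    by (simp add: dist_norm power2_norm_eq_inner)
  also have "\<dots> \<longleftrightarrow> (q - p) \<bullet> x \<le> (q \<bullet> q - p \<bullet> p) / 2"
    by (simp add: inner_diff_left inner_diff_right inner_commute[of x p] inner_commute[of x q]
        field_simps)
  finally show ?thesis .
qed

lemma line_sep_nearest_center_cells:
  assumes "finite S" "p \<in> S" "q \<in> S" "key p < key q"
  shows "line_sep {x \<in> X. nearest_center key S x = p} {x \<in> X. nearest_center key S x = q}"
  unfolding line_sep_def
proof (intro exI[of _ "q - p"] exI[of _ "(q \<bullet> q - p \<bullet> p) / 2"] conjI ballI)
  show "q - p \<noteq> 0" using assms(4) by auto
next
  fix x assume "x \<in> {x \<in> X. nearest_center key S x = p}"
  then have "dist x p \<le> dist x q" using dist_nearest_center_le[OF assms(1,3), of x key] by simp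
  then show "(q - p) \<bullet> x \<le> (q \<bullet> q - p \<bullet> p) / 2" by (simp add: dist_le_dist_iff_inner)
next
  fix x assume "x \<in> {x \<in> X. nearest_center key S x = q}"
  then have "dist x q < dist x p" using dist_nearest_center_less[OF assms(1,2), of key x] assms(4) by simp
  then show "(q - p) \<bullet> x > (q \<bullet> q - p \<bullet> p) / 2" using dist_le_dist_iff_inner[of x p q] by linarith
qed

lemma line_sep_nearest_center_cells_either:
  assumes "finite S" "inj_on key S" "p \<in> S" "q \<in> S" "p \<noteq> q"
  shows "line_sep {x \<in> X. nearest_center key S x = p} {x \<in> X. nearest_center key S x = q} \<or>
         line_sep {x \<in> X. nearest_center key S x = q} {x \<in> X. nearest_center key S x = p}"
proof -
  have "key p \<noteq> key q" using assms(2-5) by (meson inj_on_contraD)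
  then consider (pq) "key p < key q" | (qp) "key q < key p" by (rule linorder_neqE)
  then show ?thesis
  proof cases
    case pq
    show ?thesis by (rule disjI1, rule line_sep_nearest_center_cells[OF assms(1,3,4) pq])
  next
    case qp
    show ?thesis by (rule disjI2, rule line_sep_nearest_center_cells[OF assms(1,4,3) qp])
  qed
qed

lemma dist_nearest_center_dominating:
  assumes "dominating_set P S" "finite P" "x \<in> P"
  shows "dist x (nearest_center key S x) \<le> 1"
proof -
  have fin: "finite S" using assms(1,2) finite_subset by (auto simp: dominating_set_def)
  obtain t where "t \<in> S" "dist x t \<le> 1"
    using assms(1,3) unfolding dominating_set_def by fastforce
  then show ?thesis using dist_nearest_center_le[OF fin, of t x key] by simp
qed

lemma is_sublist_singleton:
  assumes "x \<in> set ps"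
  shows "is_sublist ps {x}"
proof -
  obtain i where i: "i < length ps" "ps ! i = x"
    using assms by (auto simp: in_set_conv_nth)
  then have "cyc_sublist ps i 1 = {x}" by (simp add: cyc_sublist_def)
  with i show ?thesis
    unfolding is_sublist_def by (intro exI[of _ i] exI[of _ 1]) simp
qed

lemma is_partition_singletons: "is_partition ps ((\<lambda>x. {x}) ` set ps)"
  unfolding is_partition_def
proof (intro conjI ballI impI)
  fix \<alpha> assume "\<alpha> \<in> (\<lambda>x. {x}) ` set ps"
  then show "is_sublist ps \<alpha>" "\<alpha> \<noteq> {}" using is_sublist_singleton by auto
qed auto

lemma center_group_singletons:
  "center_group ((\<lambda>x. {x}) ` X) (\<lambda>\<alpha>. f (the_elem \<alpha>)) p = {x \<in> X. f x = p}"
  by (auto simp: center_group_def)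

lemma is_assignment_nearest_center_singletons:
  assumes "dominating_set (set ps) S"
  shows "is_assignment ((\<lambda>x. {x}) ` set ps) S (\<lambda>\<alpha>. nearest_center key S (the_elem \<alpha>))"
  unfolding is_assignment_def
proof
  fix \<alpha> assume "\<alpha> \<in> (\<lambda>x. {x}) ` set ps"
  then obtain x where x: "x \<in> set ps" "\<alpha> = {x}" by blast
  have fin: "finite S" "S \<noteq> {}"
    using assms x(1) finite_subset by (auto simp: dominating_set_def)
  show "nearest_center key S (the_elem \<alpha>) \<in> S \<and> \<alpha> \<subseteq> unit_disk (nearest_center key S (the_elem \<alpha>))"
    using x nearest_center_in[OF fin, of key x] dist_nearest_center_dominating[OF assms _ x(1), of key]
    by (simp add: unit_disk_def dist_commute)
qed

theorem lemma1:
  fixes ps :: "point list" and S :: "point set"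
  assumes "distinct ps"
    and "convex_position (set ps)"
    and "no_three_collinear (set ps)"
    and "no_four_cocircular (set ps)"
    and "ccw_hull_order ps"
    and "dominating_set (set ps) S"
  shows "\<exists>A \<phi>. is_partition ps A \<and> is_assignment A S \<phi> \<and> line_separable A S \<phi> \<and>
           (\<forall>p\<in>S. p \<in> center_group A \<phi> p)"
proof -
  have fin: "finite S"
    using assms(6) finite_subset by (auto simp: dominating_set_def)
  obtain key :: "point \<Rightarrow> nat" where key: "inj_on key S"
    using finite_imp_inj_to_nat_seg[OF fin] by blast
  define A where "A = (\<lambda>x. {x}) ` set ps"
  define \<phi> where "\<phi> = (\<lambda>\<alpha>. nearest_center key S (the_elem \<alpha>))"
  have cells: "center_group A \<phi> p = {x \<in> set ps. nearest_center key S x = p}" for p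
    unfolding A_def \<phi>_def by (rule center_group_singletons)
  have "is_partition ps A" "is_assignment A S \<phi>"
    unfolding A_def \<phi>_def
    by (rule is_partition_singletons, rule is_assignment_nearest_center_singletons[OF assms(6)])
  moreover have "line_separable A S \<phi>"
    using line_sep_nearest_center_cells_either[OF fin key]
    by (simp add: line_separable_def cells)
  moreover have "\<forall>p\<in>S. p \<in> center_group A \<phi> p"
    using nearest_center_self[OF fin] assms(6) by (auto simp: cells dominating_set_def)
  ultimately show ?thesis by blast
qed

end
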